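(* Given $F\in \mathcal{G}_{N}^{dif}(A)$ with coefficients $f_{u}^{i}$, the left substitutional inverse of $F$ (i.e. the series $G$ with $G\circ F=(z_{1},\ldots,z_{N})$) is the power series $G(z)$ with coefficients $g_{v}^{j}=\langle S_{\mathcal{L}}(Y_{v}^{j}),F\rangle$, where $S_{\mathcal{L}}=\mathbf{s}S_{\mathcal{H}}\mathbf{s}$ is the antipode of the left Lagrange Hopf algebra $\mathcal{L}^{N}$. The right substitutional inverse of $F$ (i.e. the series $H$ with $F\circ H=(z_{1},\ldots,z_{N})$) is the power series $H(z)$ with coefficients $h_{v}^{j}=\langle S_{\mathcal{R}}(Y_{v}^{j}),F\rangle$, where $S_{\mathcal{R}}=\mathbf{t}S_{\mathcal{H}}\mathbf{t}$ is the antipode of the right Lagrange Hopf algebra $\mathcal{R}^{N}$.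
   Context: Let $A$ be a non-commutative unital algebra and $z_{1},\ldots,z_{N}$ non-commuting variables commuting with elements of $A$; for a word $w=w(1)\cdots w(p)$ in the free monoid on $\langle N\rangle=\{1,\ldots,N\}$ put $z_{w}=z_{w(1)}\cdots z_{w(p)}$. $\mathcal{G}_{N}^{dif}(A)$ is the set of $N$-tuples $F=(F^{1},\ldots,F^{N})$ of formal power series $F^{j}(z)=z_{j}+\sum_{|u|\geq 2}f_{u}^{j}z_{u}$ with $f_{u}^{j}\in A$. For $F,G\in\mathcal{G}_{N}^{dif}(A)$, $F\circ G$ denotes substitution of $G^{j}$ for $z_{j}$ in each $F^{i}$; its coefficients are $(F\circ G)_{u}^{i}=\sum f_{w}^{i}g_{u|C_{1}}^{w(1)}\cdots g_{u|C_{q}}^{w(q)}$, summed over all colored interval (ordered) partitions $((C_{1},\ldots,C_{q}),w(1)\cdots w(q))$, $1\le q\le p$, of the colored set $([p],u(1)\cdots u(p))$ (with $f_{j}^{i}=\delta_{ij}$). $\mathcal{H}=\mathcal{H}^{N}$ is the incidence Hopf algebra of $N$-colored interval partitions: as an algebra it is free on generators $Y_{u}^{i}$ ($1\le i\le N$, $|u|\ge 2$), with $Y_{j}^{i}=\delta_{ij}1$, coproduct $\Delta(Y_{u}^{i})=\sum Y_{u|C_{1}}^{v(1)}\cdots Y_{u|C_{q}}^{v(q)}\otimes Y_{v}^{i}$ (sum over colored interval partitions $((C_{1},\ldots,C_{q}),v)$ of $([|u|],u)$), counit $\varepsilon(Y_{u}^{i})=0$ for $|u|\ge2$, and antipode $S_{\mathcal{H}}$.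 $\mathbf{s}$ is the algebra anti-automorphism of $\mathcal{H}$ with $\mathbf{s}(Y_{u}^{i})=Y_{u^{*}}^{i}$ ($u^{*}$ the reversed word), and $\mathbf{t}$ is the algebra anti-automorphism with $\mathbf{t}(Y_{u}^{i})=Y_{u}^{i}$. The left Lagrange Hopf algebra $\mathcal{L}^{N}$ is $\mathcal{H}^{N}$ with coproduct $\Delta^{op}$ and antipode $S_{\mathcal{H}}^{-1}=\mathbf{s}S_{\mathcal{H}}\mathbf{s}$; the right Lagrange Hopf algebra $\mathcal{R}^{N}$ is the $\mathbf{t}$-transformed Hopf algebra with antipode $\mathbf{t}S_{\mathcal{H}}\mathbf{t}$. The pairing $\langle\,,\rangle:\mathcal{L}^{N}\times\mathcal{G}_{N}^{dif}(A)\to A$ is the bilinear map determined by $\langle Y_{u_{1}}^{i_{1}}\cdots Y_{u_{q}}^{i_{q}},F\rangle=f_{u_{1}}^{i_{1}}\cdots f_{u_{q}}^{i_{q}}$ (and $\langle 1,F\rangle=1$); it satisfies $\langle Y_{u}^{i},F\circ G\rangle=m_{A}\langle\Delta^{op}(Y_{u}^{i}),F\otimes G\rangle$. *)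

theory Defs
  imports Main
begin

definition words_over :: "nat \<Rightarrow> nat list set" where
  "words_over N = {w. set w \<subseteq> {1..N}}"

fun words :: "nat \<Rightarrow> nat \<Rightarrow> nat list list" where
  "words N 0 = [[]]"
| "words N (Suc q) = concat (map (\<lambda>j. map (Cons j) (words N q)) [1..<Suc N])"

text \<open>Interval (ordered) partitions of [p] = compositions of p: lists of
  positive block sizes summing to p.\<close>
fun comps :: "nat \<Rightarrow> nat list list" where
  "comps 0 = [[]]"
| "comps (Suc n) = concat (map (\<lambda>k. map (Cons (Suc k)) (comps (n - k))) [0..<Suc n])"

text \<open>Restriction of a word u to the consecutive blocks C_1,...,C_q of sizes ls.\<close>
fun blocks :: "nat list \<Rightarrow> 'b list \<Rightarrow> 'b list list" where
  "blocks [] xs = []"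
| "blocks (l # ls) xs = take l xs # blocks ls (drop l xs)"

text \<open>A series F is given by its coefficient function f, with f i u = f_u^i.
  Membership in G_N^dif: no constant term and linear part the identity.\<close>
definition Gdif :: "nat \<Rightarrow> (nat \<Rightarrow> nat list \<Rightarrow> 'a::ring_1) \<Rightarrow> bool" where
  "Gdif N f \<longleftrightarrow> (\<forall>i\<in>{1..N}. f i [] = 0 \<and> (\<forall>j\<in>{1..N}. f i [j] = (if i = j then 1 else 0)))"

text \<open>Coefficients of F \<circ> G: sum over colored interval partitions.\<close>
definition comp :: "nat \<Rightarrow> (nat \<Rightarrow> nat list \<Rightarrow> 'a::ring_1) \<Rightarrow> (nat \<Rightarrow> nat list \<Rightarrow> 'a)
    \<Rightarrow> nat \<Rightarrow> nat list \<Rightarrow> 'a" where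
  "comp N f g i u = sum_list (map (\<lambda>ls. sum_list (map (\<lambda>w.
       f i w * prod_list (map (\<lambda>(j, b). g j b) (zip w (blocks ls u))))
     (words N (length ls)))) (comps (length u)))"

definition idc :: "nat \<Rightarrow> nat list \<Rightarrow> 'a::ring_1" where
  "idc i u = (if u = [i] then 1 else 0)"

text \<open>A monomial is a list of generators Y_u^i, encoded as pairs (i,u);
  an element is a formal integer linear combination of monomials.\<close>
type_synonym mono = "(nat \<times> nat list) list"
type_synonym fa = "(int \<times> mono) list"

definition fa_one :: fa where "fa_one = [(1, [])]"

definition fa_mult :: "fa \<Rightarrow> fa \<Rightarrow> fa" where
  "fa_mult a b = concat (map (\<lambda>(c, m). map (\<lambda>(d, n). (c * d, m @ n)) b) a)"

definition fa_neg :: "fa \<Rightarrow> fa" where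
  "fa_neg a = map (\<lambda>(c, m). (- c, m)) a"

definition fa_scale :: "int \<Rightarrow> fa \<Rightarrow> fa" where
  "fa_scale k a = map (\<lambda>(c, m). (k * c, m)) a"

definition fa_prod :: "fa list \<Rightarrow> fa" where
  "fa_prod xs = foldr fa_mult xs fa_one"

definition Y :: "nat \<Rightarrow> nat list \<Rightarrow> fa" where
  "Y i u = (if 2 \<le> length u then [(1, [(i, u)])]
            else if u = [i] then fa_one else [])"

lemma comps_props: "ls \<in> set (comps n) \<Longrightarrow> sum_list ls = n \<and> (\<forall>l\<in>set ls. 0 < l)"
  by (induction n arbitrary: ls rule: comps.induct) fastforce+

lemma blocks_len: "b \<in> set (blocks ls xs) \<Longrightarrow> \<exists>l\<in>set ls. length b \<le> l"
  by (induction ls xs rule: blocks.induct) auto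

lemma member_lt_sum:
  assumes "2 \<le> length ls" "\<forall>l\<in>set ls. (0::nat) < l" "l \<in> set ls"
  shows "l < sum_list ls"
  using assms
proof (induction ls)
  case Nil then show ?case by simp
next
  case (Cons a xs)
  show ?case
  proof (cases "l = a")
    case True
    from Cons.prems(1) obtain c ys where "xs = c # ys" by (cases xs) auto
    with Cons.prems(2) True show ?thesis by (auto simp: member_le_sum_list)
  next
    case False
    then have l: "l \<in> set xs" using Cons.prems(3) by simp
    show ?thesis
    proof (cases "2 \<le> length xs")
      case True
      then have "l < sum_list xs" using Cons.IH Cons.prems(2) l by auto
      then show ?thesis by simp
    next
      case False
      with l have "xs = [l]" by (cases xs) (auto simp: Suc_le_eq)
      with Cons.prems(2) show ?thesis by simp
    qed
  qed
qed

function SH :: "nat \<Rightarrow> nat \<Rightarrow> nat list \<Rightarrow> fa" where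
  "SH N i u = (if length u < 2 then Y i u else
     fa_neg (concat (map (\<lambda>ls. concat (map (\<lambda>v.
         fa_mult (fa_prod (rev (map (\<lambda>(j, b). SH N j b) (zip v (blocks ls u))))) (Y i v))
       (words N (length ls))))
     (filter (\<lambda>ls. 2 \<le> length ls) (comps (length u))))))"
  by pat_completeness auto
termination
proof (relation "measure (\<lambda>(N, i, u). length u)")
  show "wf (measure (\<lambda>(N, i, u). length u))" by simp
next
  fix N i u ls v x j b
  assume ls: "ls \<in> set (filter (\<lambda>ls. 2 \<le> length ls) (comps (length u)))"
    and x: "x \<in> set (zip v (blocks ls u))" and jb: "(j, b) = x"
  have b: "b \<in> set (blocks ls u)" using x jb by (auto dest: set_zip_rightD)
  then obtain l where l: "l \<in> set ls" "length b \<le> l" using blocks_len by blast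
  from ls have "2 \<le> length ls" "sum_list ls = length u" "\<forall>l\<in>set ls. 0 < l"
    using comps_props by auto
  with l member_lt_sum have "length b < length u" by fastforce
  then show "((N, j, b), N, i, u) \<in> measure (\<lambda>(N, i, u). length u)" by simp
qed

text \<open>The above is the standard recursion for the antipode of the connected
  bialgebra H: from m(S\<otimes>id)\<Delta> = \<eta>\<epsilon> on Y_u^i, using that the
  q = 1 term of \<Delta>(Y_u^i) is Y_u^i \<otimes> 1 and S is an algebra anti-morphism:
  S(Y_u^i) = - sum over colored interval partitions ((C_1..C_q),v) with q \<ge> 2 of
  S(Y_{u|C_q}^{v(q)}) ... S(Y_{u|C_1}^{v(1)}) Y_v^i.\<close>

definition SH_ext :: "nat \<Rightarrow> fa \<Rightarrow> fa" where
  "SH_ext N a = concat (map (\<lambda>(c, m). fa_scale c (fa_prod (rev (map (\<lambda>(i, u). SH N i u) m)))) a)"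

definition s_map :: "fa \<Rightarrow> fa" where
  "s_map a = map (\<lambda>(c, m). (c, rev (map (\<lambda>(i, u). (i, rev u)) m))) a"

definition t_map :: "fa \<Rightarrow> fa" where
  "t_map a = map (\<lambda>(c, m). (c, rev m)) a"

definition S_L :: "nat \<Rightarrow> fa \<Rightarrow> fa" where
  "S_L N a = s_map (SH_ext N (s_map a))"

definition S_R :: "nat \<Rightarrow> fa \<Rightarrow> fa" where
  "S_R N a = t_map (SH_ext N (t_map a))"

definition pairing :: "fa \<Rightarrow> (nat \<Rightarrow> nat list \<Rightarrow> 'a::ring_1) \<Rightarrow> 'a" where
  "pairing a f = sum_list (map (\<lambda>(c, m). of_int c * prod_list (map (\<lambda>(i, u). f i u) m)) a)"

end

theory Submission
  imports Defs
begin

text \<open>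
  Evaluating the recursion \<open>S(Y\<^sub>u\<^sup>i) = - \<Sum> S(Y\<^bsup>v(q)\<^esup>\<^bsub>u|C\<^sub>q\<^esub>) \<cdots> S(Y\<^bsup>v(1)\<^esup>\<^bsub>u|C\<^sub>1\<^esub>) Y\<^sub>v\<^sup>i\<close>
  (sum over coloured interval partitions with at least two blocks) at \<open>F\<close> in the opposite
  algebra of \<open>A\<close>, which is what pairing after \<open>t\<close> does, gives exactly the recursion that solves
  \<open>F \<circ> H = z\<close> for the coefficients of \<open>H\<close>. Hence \<open>\<langle>S\<^sub>R(Y\<^sub>v\<^sup>j), F\<rangle>\<close> are the coefficients of
  the right inverse of \<open>F\<close>; similarly \<open>\<langle>S\<^sub>L(Y\<^sub>v\<^sup>j), F\<rangle>\<close> is the right inverse of the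
  word-reversed series \<open>F\<^sup>*\<close>, read at the reversed word \<open>v\<^sup>*\<close>.

  Substitution is not associative when \<open>A\<close> is not commutative, so the left inverse does not
  come for free. Write \<open>M\<^sub>\<sigma>(w, u)\<close> for the coefficient of \<open>z\<^sub>u\<close> in \<open>\<sigma>\<^bsup>w(1)\<^esup> \<cdots> \<sigma>\<^bsup>w(q)\<^esup>\<close> and
  \<open>R\<^sub>\<beta>(x, w)\<close> for the same coefficient computed in the opposite algebra. If \<open>\<sigma>\<close> is the right
  inverse of \<open>\<beta>\<close>, then \<open>R\<^sub>\<beta> M\<^sub>\<sigma> = 1\<close>, peeling off one factor of \<open>\<beta>\<^sup>x\<close> at a time. Multiplying
  the row \<open>\<sigma>\<^sub>i\<close> from the left gives \<open>(\<sigma>\<^sub>i R\<^sub>\<beta> - e\<^sub>i) M\<^sub>\<sigma> = 0\<close>, and since \<open>M\<^sub>\<sigma>\<close> is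
  unitriangular with respect to word length, \<open>\<sigma>\<^sub>i R\<^sub>\<beta> = e\<^sub>i\<close>. Reversing all words, this says
  that the reversed right inverse of \<open>F\<^sup>*\<close> is a left inverse of \<open>F\<close>. Uniqueness of both
  inverses follows from the same triangularity.
\<close>

section \<open>Coefficients of substituted monomials\<close>

text \<open>\<open>subst_coeff \<alpha> w u\<close> is the coefficient of \<open>z\<^sub>u\<close> in \<open>\<alpha>\<^bsup>w(1)\<^esup> \<cdots> \<alpha>\<^bsup>w(q)\<^esup>\<close>, i.e. \<open>M\<^sub>\<alpha>(w, u)\<close>.\<close>

fun subst_coeff :: "(nat \<Rightarrow> nat list \<Rightarrow> 'a::ring_1) \<Rightarrow> nat list \<Rightarrow> nat list \<Rightarrow> 'a" where
  "subst_coeff \<alpha> [] u = (if u = [] then 1 else 0)"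
| "subst_coeff \<alpha> (a # w) u = (\<Sum>k\<in>{1..length u}. \<alpha> a (take k u) * subst_coeff \<alpha> w (drop k u))"

declare subst_coeff.simps(2) [simp del]

lemma subst_coeff_eq_0: "length u < length w \<Longrightarrow> subst_coeff \<alpha> w u = 0"
  by (induction w arbitrary: u) (auto simp: subst_coeff.simps(2) intro!: sum.neutral)

lemma subst_coeff_singleton: "subst_coeff \<alpha> [a] u = (if u = [] then 0 else \<alpha> a u)"
proof -
  have "subst_coeff \<alpha> [a] u = (\<Sum>k\<in>{1..length u}. if k = length u then \<alpha> a u else 0)"
    unfolding subst_coeff.simps(2) by (rule sum.cong) auto
  then show ?thesis by (auto simp: Suc_le_eq)
qed

lemma subst_coeff_same_length:
  "length w = length u \<Longrightarrow> subst_coeff \<alpha> w u = prod_list (map2 (\<lambda>a b. \<alpha> a [b]) w u)"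
proof (induction w arbitrary: u)
  case (Cons a w)
  then obtain b v where u: "u = b # v" by (cases u) auto
  have "subst_coeff \<alpha> (a # w) u = (\<Sum>k\<in>{1..length u}. if k = 1 then \<alpha> a [b] * subst_coeff \<alpha> w v else 0)"
    unfolding subst_coeff.simps(2)
    by (rule sum.cong) (use Cons.prems u in \<open>auto simp: subst_coeff_eq_0\<close>)
  with Cons u show ?case by (simp add: Suc_le_eq)
qed simp

lemma subst_coeff_append:
  "subst_coeff \<alpha> (w1 @ w2) u
     = (\<Sum>m\<in>{0..length u}. subst_coeff \<alpha> w1 (take m u) * subst_coeff \<alpha> w2 (drop m u))"
proof (induction w1 arbitrary: u)
  case Nil
  have "(\<Sum>m\<in>{0..length u}. subst_coeff \<alpha> [] (take m u) * subst_coeff \<alpha> w2 (drop m u))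
      = (\<Sum>m\<in>{0..length u}. if m = 0 then subst_coeff \<alpha> w2 u else 0)"
    by (rule sum.cong) auto
  then show ?case by simp
next
  case (Cons a w1)
  define n where "n = length u"
  let ?F = "\<lambda>k m. \<alpha> a (take k u) * (subst_coeff \<alpha> w1 (drop k (take m u)) * subst_coeff \<alpha> w2 (drop m u))"
  have "subst_coeff \<alpha> ((a # w1) @ w2) u
      = (\<Sum>k\<in>{1..n}. \<Sum>m'\<in>{0..n-k}. \<alpha> a (take k u)
           * (subst_coeff \<alpha> w1 (take m' (drop k u)) * subst_coeff \<alpha> w2 (drop m' (drop k u))))"
    by (simp add: subst_coeff.simps(2) Cons n_def sum_distrib_left)
  also have "\<dots> = (\<Sum>k\<in>{1..n}. \<Sum>m\<in>{k..n}. ?F k m)"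
  proof (rule sum.cong[OF refl])
    fix k assume "k \<in> {1..n}"
    then show "(\<Sum>m'\<in>{0..n-k}. \<alpha> a (take k u)
           * (subst_coeff \<alpha> w1 (take m' (drop k u)) * subst_coeff \<alpha> w2 (drop m' (drop k u))))
        = (\<Sum>m\<in>{k..n}. ?F k m)"
      by (intro sum.reindex_bij_witness[where i="\<lambda>m. m - k" and j="\<lambda>m'. m' + k"])
         (auto simp: take_drop add.commute)
  qed
  also have "\<dots> = (\<Sum>m\<in>{0..n}. \<Sum>k\<in>{1..m}. ?F k m)"
  proof -
    have "(\<Sum>k\<in>{1..n}. \<Sum>m\<in>{k..n}. ?F k m) = (\<Sum>k\<in>{1..n}. \<Sum>m | m \<in> {0..n} \<and> k \<le> m. ?F k m)"
      by (intro sum.cong) auto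
    also have "\<dots> = (\<Sum>m\<in>{0..n}. \<Sum>k | k \<in> {1..n} \<and> k \<le> m. ?F k m)"
      by (rule sum.swap_restrict) auto
    also have "\<dots> = (\<Sum>m\<in>{0..n}. \<Sum>k\<in>{1..m}. ?F k m)"
      by (intro sum.cong) auto
    finally show ?thesis .
  qed
  also have "\<dots> = (\<Sum>m\<in>{0..n}. subst_coeff \<alpha> (a # w1) (take m u) * subst_coeff \<alpha> w2 (drop m u))"
    by (rule sum.cong[OF refl])
       (auto simp: subst_coeff.simps(2) sum_distrib_right mult.assoc n_def min_def intro!: sum.cong)
  finally show ?case by (simp add: n_def)
qed

lemma subst_coeff_cong:
  assumes "\<And>j b. j \<in> set w \<Longrightarrow> b \<noteq> [] \<Longrightarrow> set b \<subseteq> set u \<Longrightarrow> length b + length w \<le> length u + 1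
             \<Longrightarrow> \<alpha> j b = \<gamma> j b"
  shows "subst_coeff \<alpha> w u = subst_coeff \<gamma> w u"
  using assms
proof (induction w arbitrary: u)
  case (Cons a w)
  show ?case
    unfolding subst_coeff.simps(2)
  proof (rule sum.cong[OF refl])
    fix k assume k: "k \<in> {1..length u}"
    show "\<alpha> a (take k u) * subst_coeff \<alpha> w (drop k u) = \<gamma> a (take k u) * subst_coeff \<gamma> w (drop k u)"
    proof (cases "k + length w \<le> length u")
      case True
      have "\<alpha> a (take k u) = \<gamma> a (take k u)"
        using True k by (intro Cons.prems) (auto dest: in_set_takeD)
      moreover have "subst_coeff \<alpha> w (drop k u) = subst_coeff \<gamma> w (drop k u)"
        using k by (intro Cons.IH Cons.prems) (auto dest: in_set_dropD)
      ultimately show ?thesis by simp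
    next
      case False
      then have "length (drop k u) < length w" using k by auto
      then show ?thesis by (simp add: subst_coeff_eq_0)
    qed
  qed
qed simp

definition words_upto :: "nat \<Rightarrow> nat \<Rightarrow> nat list set" where
  "words_upto N n = {w \<in> words_over N. length w \<le> n}"

definition words_of_length :: "nat \<Rightarrow> nat \<Rightarrow> nat list set" where
  "words_of_length N q = {w \<in> words_over N. length w = q}"

lemma finite_words_upto [simp]: "finite (words_upto N n)"
  using finite_lists_length_le[of "{1..N}" n] by (simp add: words_upto_def words_over_def)

lemma length_words: "w \<in> set (words N q) \<Longrightarrow> length w = q"
  by (induction q arbitrary: w) auto

lemma sum_list_concat: "sum_list (concat xss) = sum_list (map sum_list xss)"
  by (induction xss) auto

lemma sum_list_words: "sum_list (map h (words N q)) = sum h (words_of_length N q)"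
proof (induction q arbitrary: h)
  case 0
  have "words_of_length N 0 = {[]}" by (auto simp: words_of_length_def words_over_def)
  then show ?case by simp
next
  case (Suc q)
  have "sum_list (map h (words N (Suc q)))
      = sum_list (map (\<lambda>j. sum_list (map (\<lambda>w. h (j # w)) (words N q))) [1..<Suc N])"
    by (simp add: sum_list_concat map_concat o_def)
  also have "\<dots> = (\<Sum>j\<in>{1..N}. \<Sum>w\<in>words_of_length N q. h (j # w))"
    by (simp only: Suc.IH interv_sum_list_conv_sum_set_nat set_upt atLeastLessThanSuc_atLeastAtMost)
  also have "\<dots> = (\<Sum>(j, w)\<in>{1..N} \<times> words_of_length N q. h (j # w))"
    by (rule sum.cartesian_product)
  also have "\<dots> = sum h (words_of_length N (Suc q))"
    by (rule sum.reindex_bij_witness[where i="\<lambda>w. (hd w, tl w)" and j="\<lambda>(j, w). j # w"])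
       (auto simp: words_of_length_def words_over_def length_Suc_conv)
  finally show ?case .
qed

lemma sum_words_upto_cutoff:
  assumes "n \<le> B" and "\<And>w. n < length w \<Longrightarrow> F w = 0"
  shows "(\<Sum>w\<in>words_upto N B. F w) = (\<Sum>w\<in>words_upto N n. F w)"
  using assms by (intro sum.mono_neutral_right[OF finite_words_upto]) (auto simp: words_upto_def intro: leI)

lemma sum_list_group_length:
  assumes "\<forall>ls\<in>set L. length ls \<le> n"
  shows "sum_list (map h (filter (\<lambda>ls. Q (length ls)) L))
       = (\<Sum>q | q \<le> n \<and> Q q. sum_list (map h (filter (\<lambda>ls. length ls = q) L)))"
  using assms
proof (induction L)
  case (Cons x L)
  have fin: "finite {q. q \<le> n \<and> Q q}" by simp
  have "(\<Sum>q | q \<le> n \<and> Q q. sum_list (map h (filter (\<lambda>ls. length ls = q) (x # L))))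
     = (\<Sum>q | q \<le> n \<and> Q q. (if length x = q then h x else 0)
          + sum_list (map h (filter (\<lambda>ls. length ls = q) L)))"
    by (rule sum.cong) auto
  also have "\<dots> = sum_list (map h (filter (\<lambda>ls. Q (length ls)) (x # L)))"
    using Cons fin by (simp add: sum.distrib sum.delta)
  finally show ?case by simp
qed simp

lemma sum_list_sum_swap:
  "sum_list (map (\<lambda>x. \<Sum>y\<in>S. g x y) L) = (\<Sum>y\<in>S. sum_list (map (\<lambda>x. g x y) L))"
  by (induction L) (auto simp: sum.distrib)

lemma sum_idc_mult: "finite A \<Longrightarrow> (\<Sum>w\<in>A. idc i w * F w) = (if [i] \<in> A then F [i] else 0)"
proof -
  assume "finite A"
  have "(\<Sum>w\<in>A. idc i w * F w) = (\<Sum>w\<in>A. if w = [i] then F w else 0)"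
    by (rule sum.cong) (simp_all add: idc_def)
  with \<open>finite A\<close> show ?thesis by simp
qed

lemma sum_words_upto_split_first:
  "(\<Sum>w\<in>words_upto N B. \<Sum>k\<in>{1..length w}. F (take k w) (drop k w))
     = (\<Sum>w1 | w1 \<in> words_upto N B \<and> w1 \<noteq> []. \<Sum>w2\<in>words_upto N (B - length w1). F w1 w2)"
proof -
  have "(\<Sum>w\<in>words_upto N B. \<Sum>k\<in>{1..length w}. F (take k w) (drop k w))
      = (\<Sum>(w, k)\<in>Sigma (words_upto N B) (\<lambda>w. {1..length w}). F (take k w) (drop k w))"
    by (rule sum.Sigma) auto
  also have "\<dots> = (\<Sum>(w1, w2)\<in>Sigma {w1. w1 \<in> words_upto N B \<and> w1 \<noteq> []} (\<lambda>w1. words_upto N (B - length w1)).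
      F w1 w2)"
    by (rule sum.reindex_bij_witness[where i="\<lambda>(w1, w2). (w1 @ w2, length w1)"
          and j="\<lambda>(w, k). (take k w, drop k w)"])
       (auto simp: words_upto_def words_over_def min_def subset_iff Suc_le_eq dest: in_set_takeD in_set_dropD)
  also have "\<dots> = (\<Sum>w1 | w1 \<in> words_upto N B \<and> w1 \<noteq> []. \<Sum>w2\<in>words_upto N (B - length w1). F w1 w2)"
    by (rule sum.Sigma[symmetric]) (auto intro: finite_subset[OF _ finite_words_upto])
  finally show ?thesis .
qed

lemma sum_take_eq_singleton:
  "(\<Sum>m\<in>{0..length u}. if take m u = [a] then F (drop m u) else 0)
     = (if u \<noteq> [] \<and> hd u = a then F (tl u) else (0::'a::comm_monoid_add))"
proof (cases u)
  case (Cons b v)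
  have "(\<Sum>m\<in>{0..length u}. if take m u = [a] then F (drop m u) else 0)
      = (\<Sum>m\<in>{0..length u}. if m = 1 then (if b = a then F v else 0) else 0)"
    using Cons by (intro sum.cong refl) (auto simp: take_Cons' drop_Cons')
  with Cons show ?thesis by (simp add: Suc_le_eq)
qed simp

section \<open>Composition\<close>

lemma subst_coeff_eq_sum_list_comps:
  "subst_coeff \<alpha> w u = sum_list (map (\<lambda>ls. prod_list (map (\<lambda>(j, b). \<alpha> j b) (zip w (blocks ls u))))
     (filter (\<lambda>ls. length ls = length w) (comps (length u))))"
proof (induction w arbitrary: u)
  case Nil
  have "filter (\<lambda>ls. ls = []) (comps (length u)) = (if u = [] then [[]] else [])"
    using comps_props[of _ "length u"] by (cases u) (auto simp: filter_empty_conv)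
  then show ?case by simp
next
  case (Cons a w)
  show ?case
  proof (cases u)
    case (Cons b u')
    define n where "n = length u'"
    have lu: "length u = Suc n" using Cons n_def by simp
    let ?h = "\<lambda>ls. prod_list (map (\<lambda>(j, b). \<alpha> j b) (zip (a # w) (blocks ls u)))"
    have "sum_list (map ?h (filter (\<lambda>ls. length ls = length (a # w)) (comps (length u))))
        = sum_list (map (\<lambda>k. sum_list (map ?h (map (Cons (Suc k))
            (filter (\<lambda>ls. length ls = length w) (comps (n - k)))))) [0..<Suc n])"
      by (simp add: lu filter_concat sum_list_concat map_concat filter_map o_def)
    also have "\<dots> = sum_list (map (\<lambda>k. \<alpha> a (take (Suc k) u) * subst_coeff \<alpha> w (drop (Suc k) u)) [0..<Suc n])"
      using lu by (simp add: Cons.IH o_def sum_list_const_mult del: take_Suc_Cons drop_Suc_Cons)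
    also have "\<dots> = (\<Sum>k\<in>{1..length u}. \<alpha> a (take k u) * subst_coeff \<alpha> w (drop k u))"
      by (simp add: interv_sum_list_conv_sum_set_nat lu)
         (rule sum.reindex_bij_witness[where i="\<lambda>k. k - 1" and j=Suc]; auto)
    finally show ?thesis by (simp add: subst_coeff.simps(2))
  qed (simp add: subst_coeff.simps(2))
qed

lemma length_comps: "ls \<in> set (comps n) \<Longrightarrow> length ls \<le> n"
proof -
  assume "ls \<in> set (comps n)"
  then have "sum_list ls = n" and "\<forall>l\<in>set ls. 0 < l" using comps_props by auto
  moreover from this(2) have "length ls \<le> sum_list ls" by (induction ls) (auto simp: Suc_le_eq)
  ultimately show ?thesis by simp
qed

lemma sum_list_comps_words:
  "sum_list (map (\<lambda>ls. sum_list (map (\<lambda>w. c w * prod_list (map (\<lambda>(j, b). \<gamma> j b) (zip w (blocks ls u))))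
      (words N (length ls)))) (filter (\<lambda>ls. Q (length ls)) (comps (length u))))
   = (\<Sum>w | w \<in> words_upto N (length u) \<and> Q (length w). (c w :: 'a::ring_1) * subst_coeff \<gamma> w u)"
  (is "sum_list (map ?H _) = _")
proof -
  let ?W = "{w. w \<in> words_upto N (length u) \<and> Q (length w)}"
  let ?term = "\<lambda>w ls. c w * prod_list (map (\<lambda>(j, b). \<gamma> j b) (zip w (blocks ls u)))"
  have "sum_list (map ?H (filter (\<lambda>ls. Q (length ls)) (comps (length u))))
     = (\<Sum>q | q \<le> length u \<and> Q q. sum_list (map ?H (filter (\<lambda>ls. length ls = q) (comps (length u)))))"
    by (intro sum_list_group_length) (auto dest: length_comps)
  also have "\<dots> = (\<Sum>q | q \<le> length u \<and> Q q. \<Sum>w\<in>words_of_length N q. c w * subst_coeff \<gamma> w u)"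
  proof (rule sum.cong[OF refl])
    fix q
    have "sum_list (map ?H (filter (\<lambda>ls. length ls = q) (comps (length u))))
        = sum_list (map (\<lambda>ls. \<Sum>w\<in>words_of_length N q. ?term w ls) (filter (\<lambda>ls. length ls = q) (comps (length u))))"
      by (intro arg_cong[where f=sum_list] map_cong) (simp_all add: sum_list_words)
    also have "\<dots> = (\<Sum>w\<in>words_of_length N q. c w * subst_coeff \<gamma> w u)"
      by (simp add: sum_list_sum_swap sum_list_const_mult subst_coeff_eq_sum_list_comps words_of_length_def)
    finally show "sum_list (map ?H (filter (\<lambda>ls. length ls = q) (comps (length u))))
        = (\<Sum>w\<in>words_of_length N q. c w * subst_coeff \<gamma> w u)" .
  qed
  also have "\<dots> = (\<Sum>q | q \<le> length u \<and> Q q. \<Sum>w | w \<in> ?W \<and> length w = q. c w * subst_coeff \<gamma> w u)"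
    by (intro sum.cong) (auto simp: words_upto_def words_of_length_def)
  also have "\<dots> = (\<Sum>w\<in>?W. c w * subst_coeff \<gamma> w u)"
    by (rule sum.group) (auto simp: words_upto_def intro: finite_subset[OF _ finite_words_upto])
  finally show ?thesis .
qed

lemma comp_eq_sum:
  "length u \<le> B \<Longrightarrow> comp N g f i u = (\<Sum>w\<in>words_upto N B. g i w * subst_coeff f w u)"
  using sum_list_comps_words[where Q="\<lambda>_. True" and c="g i" and \<gamma>=f and u=u and N=N]
  by (simp add: comp_def sum_words_upto_cutoff subst_coeff_eq_0)

lemma comp_cong:
  assumes "i \<in> {1..N}" "u \<in> words_over N"
    and "\<And>j v. j \<in> {1..N} \<Longrightarrow> v \<in> words_over N \<Longrightarrow> g j v = g' j v"
    and "\<And>j v. j \<in> {1..N} \<Longrightarrow> v \<in> words_over N \<Longrightarrow> f j v = f' j v"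
  shows "comp N g f i u = comp N g' f' i u"
proof -
  have "subst_coeff f w u = subst_coeff f' w u" if "w \<in> words_upto N (length u)" for w
    using that assms(2,4) by (intro subst_coeff_cong) (auto simp: words_upto_def words_over_def)
  moreover have "g i w = g' i w" if "w \<in> words_upto N (length u)" for w
    using that assms(1,3) by (simp add: words_upto_def)
  ultimately show ?thesis by (simp add: comp_eq_sum[OF order_refl])
qed

lemma Gdif_iff: "Gdif N f \<longleftrightarrow> (\<forall>i\<in>{1..N}. \<forall>w\<in>words_over N. length w < 2 \<longrightarrow> f i w = idc i w)"
proof
  assume f: "Gdif N f"
  show "\<forall>i\<in>{1..N}. \<forall>w\<in>words_over N. length w < 2 \<longrightarrow> f i w = idc i w"
  proof (intro ballI impI)
    fix i w assume "i \<in> {1..N}" "w \<in> words_over N" "length w < 2"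
    with f show "f i w = idc i w"
      by (cases w) (auto simp: Gdif_def words_over_def idc_def)
  qed
next
  assume "\<forall>i\<in>{1..N}. \<forall>w\<in>words_over N. length w < 2 \<longrightarrow> f i w = idc i w"
  then show "Gdif N f"
    by (auto simp: Gdif_def words_over_def idc_def)
qed

lemma comp_split_linear_part:
  assumes "Gdif N f" and "j \<in> {1..N}"
  shows "comp N f h j v = (if v = [] then 0 else h j v)
     + (\<Sum>w | w \<in> words_upto N (length v) \<and> 2 \<le> length w. f j w * subst_coeff h w v)"
proof -
  let ?W = "words_upto N (length v)"
  have fin: "finite {w \<in> ?W. length w < 2}" by simp
  have "comp N f h j v = (\<Sum>w\<in>?W. f j w * subst_coeff h w v)"
    by (simp add: comp_eq_sum[OF order_refl])
  also have "\<dots> = (\<Sum>w\<in>{w \<in> ?W. length w < 2} \<union> {w \<in> ?W. 2 \<le> length w}. f j w * subst_coeff h w v)"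
    by (rule sum.cong) auto
  also have "\<dots> = (\<Sum>w | w \<in> ?W \<and> length w < 2. f j w * subst_coeff h w v)
      + (\<Sum>w | w \<in> ?W \<and> 2 \<le> length w. f j w * subst_coeff h w v)"
    by (rule sum.union_disjoint) auto
  finally have "comp N f h j v = \<dots>" .
  moreover have "(\<Sum>w | w \<in> ?W \<and> length w < 2. f j w * subst_coeff h w v)
      = (\<Sum>w | w \<in> ?W \<and> length w < 2. idc j w * subst_coeff h w v)"
    using assms by (intro sum.cong) (auto simp: Gdif_iff words_upto_def)
  moreover have "\<dots> = (if v = [] then 0 else h j v)"
    using assms(2)
    by (subst sum_idc_mult[OF fin]) (auto simp: subst_coeff_singleton words_upto_def words_over_def Suc_le_eq)
  ultimately show ?thesis by simp
qed

lemma subst_coeff_Gdif_same_length: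
  assumes "Gdif N f" and "w \<in> words_over N" "u \<in> words_over N" "length w = length u"
  shows "subst_coeff f w u = (if w = u then 1 else 0)"
  using assms(2-)
proof (induction w arbitrary: u)
  case (Cons a w)
  then obtain b v where u: "u = b # v" by (cases u) auto
  have "f a [b] = (if a = b then 1 else 0)"
    using assms(1) Cons.prems by (auto simp: Gdif_def words_over_def u)
  with Cons.IH[of v] Cons.prems show ?case
    by (auto simp: u subst_coeff_same_length words_over_def)
qed simp

lemma eq_0_of_unitriangular:
  assumes diag: "\<And>w u. w \<in> words_over N \<Longrightarrow> u \<in> words_over N \<Longrightarrow> length w = length u
      \<Longrightarrow> M w u = (if w = u then 1 else 0)"
    and kernel: "\<And>u. u \<in> words_over N \<Longrightarrow> (\<Sum>w\<in>words_upto N (length u). c w * M w u) = 0"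
    and "u \<in> words_over N"
  shows "c u = (0::'a::ring_1)"
  using assms(3)
proof (induction "length u" arbitrary: u rule: less_induct)
  case less
  have "c u = (\<Sum>w\<in>words_upto N (length u). if w = u then c w else 0)"
    using less.prems by (simp only: sum.delta[OF finite_words_upto]) (simp add: words_upto_def)
  also have "\<dots> = (\<Sum>w\<in>words_upto N (length u). c w * M w u)"
  proof (rule sum.cong[OF refl])
    fix w assume w: "w \<in> words_upto N (length u)"
    show "(if w = u then c w else 0) = c w * M w u"
    proof (cases "length w = length u")
      case True
      with w less.prems show ?thesis by (simp add: diag words_upto_def)
    next
      case False
      with w have "c w = 0" by (intro less.hyps) (auto simp: words_upto_def)
      with False show ?thesis by auto
    qed
  qed
  also have "\<dots> = 0"
    by (rule kernel[OF less.prems])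
  finally show "c u = 0" .
qed

section \<open>Pairing in the opposite algebra\<close>

definition op_pairing :: "fa \<Rightarrow> (nat \<Rightarrow> nat list \<Rightarrow> 'a::ring_1) \<Rightarrow> 'a" where
  "op_pairing a f = sum_list (map (\<lambda>(c, m). of_int c * prod_list (map (\<lambda>(i, u). f i u) (rev m))) a)"

lemma pairing_t_map: "pairing (t_map a) f = op_pairing a f"
  by (induction a) (auto simp: pairing_def t_map_def op_pairing_def case_prod_beta)

lemma pairing_s_map: "pairing (s_map a) f = op_pairing a (\<lambda>i u. f i (rev u))"
  by (induction a) (auto simp: pairing_def s_map_def op_pairing_def rev_map o_def case_prod_unfold)

lemma op_pairing_Nil [simp]: "op_pairing [] f = 0"
  by (simp add: op_pairing_def)

lemma op_pairing_append [simp]: "op_pairing (a @ b) f = op_pairing a f + op_pairing b f"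
  by (simp add: op_pairing_def)

lemma op_pairing_concat: "op_pairing (concat as) f = sum_list (map (\<lambda>a. op_pairing a f) as)"
  by (induction as) auto

lemma op_pairing_neg [simp]: "op_pairing (fa_neg a) f = - op_pairing a f"
  by (induction a) (auto simp: op_pairing_def fa_neg_def)

lemma op_pairing_scale [simp]: "op_pairing (fa_scale k a) f = of_int k * op_pairing a f"
  by (induction a) (auto simp: op_pairing_def fa_scale_def distrib_left mult.assoc)

lemma op_pairing_one [simp]: "op_pairing fa_one f = 1"
  by (simp add: op_pairing_def fa_one_def)

lemma op_pairing_Cons:
  "op_pairing ((c, m) # a) f = of_int c * prod_list (map (\<lambda>(i, u). f i u) (rev m)) + op_pairing a f"
  by (simp add: op_pairing_def)

lemma op_pairing_map_prepend:
  "op_pairing (map (\<lambda>(d, n). (c * d, m @ n)) b) f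
     = op_pairing b f * (of_int c * prod_list (map (\<lambda>(i, u). f i u) (rev m)))"
proof (induction b)
  case (Cons y b)
  obtain d n where y: "y = (d, n)" by (cases y)
  let ?M = "prod_list (map (\<lambda>(i, u). f i u) (rev m))"
  let ?N = "prod_list (map (\<lambda>(i, u). f i u) (rev n))"
  have "of_int (c * d) * (?N * ?M) = of_int d * (?N * of_int c) * ?M"
    by (simp add: mult.assoc mult_of_int_commute[of c] mult.commute[of c d])
  also have "\<dots> = of_int d * ?N * (of_int c * ?M)"
    by (simp add: mult.assoc)
  finally show ?case
    using Cons by (simp add: y op_pairing_Cons distrib_right)
qed simp

lemma op_pairing_mult [simp]: "op_pairing (fa_mult a b) f = op_pairing b f * op_pairing a f"
proof (induction a)
  case (Cons x a)
  obtain c m where x: "x = (c, m)" by (cases x)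
  have "fa_mult (x # a) b = map (\<lambda>(d, n). (c * d, m @ n)) b @ fa_mult a b"
    by (simp add: fa_mult_def x)
  with Cons show ?case
    by (simp add: x op_pairing_map_prepend op_pairing_Cons distrib_left)
qed (simp add: fa_mult_def)

lemma op_pairing_prod_rev: "op_pairing (fa_prod (rev as)) f = prod_list (map (\<lambda>a. op_pairing a f) as)"
proof -
  have "op_pairing (fa_prod bs) f = prod_list (map (\<lambda>a. op_pairing a f) (rev bs))" for bs
    by (induction bs) (auto simp: fa_prod_def)
  then show ?thesis by simp
qed

lemma op_pairing_Y: "op_pairing (Y i u) f = (if 2 \<le> length u then f i u else idc i u)"
  by (simp add: Y_def op_pairing_def fa_one_def idc_def)

lemma op_pairing_SH_ext:
  "op_pairing (SH_ext N a) f
     = sum_list (map (\<lambda>(c, m). of_int c * prod_list (map (\<lambda>(i, u). op_pairing (SH N i u) f) m)) a)"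
  by (induction a) (auto simp: SH_ext_def op_pairing_concat op_pairing_prod_rev o_def case_prod_beta)

section \<open>The right inverse\<close>

declare SH.simps [simp del]

definition right_inverse :: "nat \<Rightarrow> (nat \<Rightarrow> nat list \<Rightarrow> 'a::ring_1) \<Rightarrow> nat \<Rightarrow> nat list \<Rightarrow> 'a" where
  "right_inverse N f j u = op_pairing (SH N j u) f"

lemma right_inverse_short: "length u < 2 \<Longrightarrow> right_inverse N f j u = idc j u"
  by (simp add: right_inverse_def op_pairing_Y SH.simps)

lemma Gdif_right_inverse: "Gdif N (right_inverse N f)"
  by (simp add: Gdif_iff right_inverse_short)

lemma pairing_S_R_Y: "pairing (S_R N (Y j v)) f = right_inverse N f j v"
proof -
  have "pairing (S_R N (Y j v)) f = op_pairing (SH_ext N (t_map (Y j v))) f"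
    by (simp add: S_R_def pairing_t_map)
  also have "\<dots> = right_inverse N f j v"
    by (auto simp: op_pairing_SH_ext Y_def t_map_def fa_one_def right_inverse_def[symmetric]
        right_inverse_short idc_def)
  finally show ?thesis .
qed

lemma right_inverse_rec:
  assumes "2 \<le> length u"
  shows "right_inverse N f i u
    = - (\<Sum>w | w \<in> words_upto N (length u) \<and> 2 \<le> length w. f i w * subst_coeff (right_inverse N f) w u)"
proof -
  have "right_inverse N f i u = - sum_list (map (\<lambda>ls. sum_list (map (\<lambda>w.
      f i w * prod_list (map (\<lambda>(j, b). right_inverse N f j b) (zip w (blocks ls u)))) (words N (length ls))))
      (filter (\<lambda>ls. 2 \<le> length ls) (comps (length u))))"
    unfolding right_inverse_def[of N f i u] using assms
    by (subst SH.simps)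
       (auto simp: right_inverse_def op_pairing_concat op_pairing_prod_rev op_pairing_Y o_def
          case_prod_unfold length_words intro!: arg_cong[where f=sum_list] map_cong)
  then show ?thesis
    by (simp add: sum_list_comps_words)
qed

lemma comp_right_inverse:
  assumes "Gdif N f" and "i \<in> {1..N}"
  shows "comp N f (right_inverse N f) i u = idc i u"
proof (cases "2 \<le> length u")
  case True
  then have "u \<noteq> []" "idc i u = 0" by (auto simp: idc_def)
  with True show ?thesis
    by (simp add: comp_split_linear_part[OF assms] right_inverse_rec[OF True])
next
  case False
  then have "(\<Sum>w | w \<in> words_upto N (length u) \<and> 2 \<le> length w.
      f i w * subst_coeff (right_inverse N f) w u) = 0"
    by (intro sum.neutral) (auto simp: words_upto_def)
  with False show ?thesis
    by (simp add: comp_split_linear_part[OF assms] right_inverse_short) (simp add: idc_def)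
qed

lemma right_inverse_unique:
  assumes f: "Gdif N f" and h: "Gdif N h"
    and inverse: "\<And>i u. i \<in> {1..N} \<Longrightarrow> u \<in> words_over N \<Longrightarrow> comp N f h i u = idc i u"
    and "v \<in> words_over N"
  shows "\<forall>j\<in>{1..N}. h j v = right_inverse N f j v"
  using assms(4)
proof (induction "length v" arbitrary: v rule: less_induct)
  case less
  show ?case
  proof
    fix j assume j: "j \<in> {1..N}"
    show "h j v = right_inverse N f j v"
    proof (cases "v = []")
      case True
      with h j show ?thesis by (simp add: Gdif_iff right_inverse_short words_over_def)
    next
      case False
      let ?higher = "\<lambda>h. \<Sum>w | w \<in> words_upto N (length v) \<and> 2 \<le> length w. f j w * subst_coeff h w v"
      \<comment> \<open>splitting \<open>v\<close> into at least two blocks makes every block shorter than \<open>v\<close>\<close>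
      have "?higher h = ?higher (right_inverse N f)"
      proof (rule sum.cong[OF refl])
        fix w assume w: "w \<in> {w. w \<in> words_upto N (length v) \<and> 2 \<le> length w}"
        have "subst_coeff h w v = subst_coeff (right_inverse N f) w v"
        proof (rule subst_coeff_cong)
          fix i b assume "i \<in> set w" "set b \<subseteq> set v" "length b + length w \<le> length v + 1"
          with w less.prems have "i \<in> {1..N}" "b \<in> words_over N" "length b < length v"
            by (auto simp: words_upto_def words_over_def)
          with less.hyps show "h i b = right_inverse N f i b" by blast
        qed
        then show "f j w * subst_coeff h w v = f j w * subst_coeff (right_inverse N f) w v" by simp
      qed
      moreover have "comp N f h j v = comp N f (right_inverse N f) j v"
        using inverse[OF j less.prems] comp_right_inverse[OF f j] by simp
      ultimately show ?thesis
        using False by (simp add: comp_split_linear_part[OF f j])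
    qed
  qed
qed

lemma right_inverse_iff:
  assumes "Gdif N f" and "Gdif N h"
  shows "(\<forall>i\<in>{1..N}. \<forall>u\<in>words_over N. comp N f h i u = idc i u)
    \<longleftrightarrow> (\<forall>j\<in>{1..N}. \<forall>v\<in>words_over N. h j v = right_inverse N f j v)"
proof (intro iffI ballI)
  fix j v
  assume "\<forall>i\<in>{1..N}. \<forall>u\<in>words_over N. comp N f h i u = idc i u" "j \<in> {1..N}" "v \<in> words_over N"
  then show "h j v = right_inverse N f j v"
    using right_inverse_unique[OF assms] by blast
next
  fix i u
  assume "\<forall>j\<in>{1..N}. \<forall>v\<in>words_over N. h j v = right_inverse N f j v" "i \<in> {1..N}" "u \<in> words_over N"
  then show "comp N f h i u = idc i u"
    using comp_cong[of i N u f f h "right_inverse N f"] comp_right_inverse[OF assms(1)] by simp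
qed

section \<open>The left inverse\<close>

text \<open>\<open>subst_coeff_op \<gamma> x u\<close> is \<open>R\<^sub>\<gamma>(x, u)\<close>: reversing both words reverses the order of the factors.\<close>

definition subst_coeff_op :: "(nat \<Rightarrow> nat list \<Rightarrow> 'a::ring_1) \<Rightarrow> nat list \<Rightarrow> nat list \<Rightarrow> 'a" where
  "subst_coeff_op \<gamma> x u = subst_coeff (\<lambda>i y. \<gamma> i (rev y)) (rev x) (rev u)"

lemma subst_coeff_op_Nil: "subst_coeff_op \<gamma> [] u = (if u = [] then 1 else 0)"
  by (simp add: subst_coeff_op_def)

lemma subst_coeff_op_eq_0: "length u < length x \<Longrightarrow> subst_coeff_op \<gamma> x u = 0"
  by (simp add: subst_coeff_op_def subst_coeff_eq_0)

lemma subst_coeff_op_Cons: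
  "subst_coeff_op \<gamma> (a # x) u = (\<Sum>k\<in>{1..length u}. subst_coeff_op \<gamma> x (drop k u) * \<gamma> a (take k u))"
proof -
  define n where "n = length u"
  let ?\<alpha> = "\<lambda>i y. \<gamma> i (rev y)"
  let ?F = "\<lambda>k. subst_coeff_op \<gamma> x (drop k u) * (if take k u = [] then 0 else \<gamma> a (take k u))"
  have "subst_coeff_op \<gamma> (a # x) u
      = (\<Sum>m\<in>{0..n}. subst_coeff ?\<alpha> (rev x) (take m (rev u)) * subst_coeff ?\<alpha> [a] (drop m (rev u)))"
    by (simp add: subst_coeff_op_def subst_coeff_append n_def)
  also have "\<dots> = (\<Sum>m\<in>{0..n}. ?F (n - m))"
    by (rule sum.cong) (simp_all add: subst_coeff_op_def subst_coeff_singleton take_rev drop_rev n_def)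
  also have "\<dots> = (\<Sum>k\<in>{0..n}. ?F k)"
    by (rule sum.reindex_bij_witness[where i="\<lambda>k. n - k" and j="\<lambda>k. n - k"]) auto
  also have "\<dots> = (\<Sum>k\<in>{1..n}. subst_coeff_op \<gamma> x (drop k u) * \<gamma> a (take k u))"
    by (auto simp: sum.atLeast_Suc_atMost n_def intro!: sum.cong)
  finally show ?thesis by (simp add: n_def)
qed

lemma sum_subst_coeff_op_Cons_mult:
  assumes "length u \<le> B"
  shows "(\<Sum>w\<in>words_upto N B. subst_coeff_op \<beta> (a # x) w * subst_coeff \<sigma> w u)
    = (\<Sum>m\<in>{0..length u}. \<Sum>w2\<in>words_upto N B. subst_coeff_op \<beta> x w2
        * (\<Sum>w1 | w1 \<in> words_upto N B \<and> w1 \<noteq> []. \<beta> a w1 * subst_coeff \<sigma> w1 (take m u))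
        * subst_coeff \<sigma> w2 (drop m u))"
proof -
  let ?W = "words_upto N B"
  let ?W1 = "{w1. w1 \<in> ?W \<and> w1 \<noteq> []}"
  have "(\<Sum>w\<in>?W. subst_coeff_op \<beta> (a # x) w * subst_coeff \<sigma> w u)
      = (\<Sum>w\<in>?W. \<Sum>k\<in>{1..length w}.
          subst_coeff_op \<beta> x (drop k w) * \<beta> a (take k w) * subst_coeff \<sigma> (take k w @ drop k w) u)"
    by (simp add: subst_coeff_op_Cons sum_distrib_right)
  also have "\<dots> = (\<Sum>w1\<in>?W1. \<Sum>w2\<in>words_upto N (B - length w1).
      subst_coeff_op \<beta> x w2 * \<beta> a w1 * subst_coeff \<sigma> (w1 @ w2) u)"
    by (rule sum_words_upto_split_first)
  also have "\<dots> = (\<Sum>w1\<in>?W1. \<Sum>w2\<in>?W. subst_coeff_op \<beta> x w2 * \<beta> a w1 * subst_coeff \<sigma> (w1 @ w2) u)"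
    using assms by (intro sum.cong refl sum_words_upto_cutoff[symmetric]) (auto simp: subst_coeff_eq_0)
  also have "\<dots> = (\<Sum>w1\<in>?W1. \<Sum>w2\<in>?W. \<Sum>m\<in>{0..length u}. subst_coeff_op \<beta> x w2
      * (\<beta> a w1 * subst_coeff \<sigma> w1 (take m u)) * subst_coeff \<sigma> w2 (drop m u))"
    by (simp add: subst_coeff_append sum_distrib_left mult.assoc)
  also have "\<dots> = (\<Sum>m\<in>{0..length u}. \<Sum>w2\<in>?W. subst_coeff_op \<beta> x w2
      * (\<Sum>w1\<in>?W1. \<beta> a w1 * subst_coeff \<sigma> w1 (take m u)) * subst_coeff \<sigma> w2 (drop m u))"
    by (subst sum.swap, subst (2) sum.swap, subst sum.swap)
       (simp add: sum_distrib_left sum_distrib_right)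
  finally show ?thesis .
qed

lemma sum_subst_coeff_op_right_inverse:
  assumes "Gdif N f" and "x \<in> words_over N" and "length u \<le> B"
  shows "(\<Sum>w\<in>words_upto N B. subst_coeff_op f x w * subst_coeff (right_inverse N f) w u)
    = (if x = u then 1 else 0)"
  using assms(2,3)
proof (induction x arbitrary: u)
  case Nil
  have "(\<Sum>w\<in>words_upto N B. subst_coeff_op f [] w * subst_coeff (right_inverse N f) w u)
      = (\<Sum>w\<in>words_upto N B. if w = [] then subst_coeff (right_inverse N f) w u else 0)"
    by (rule sum.cong) (simp_all add: subst_coeff_op_Nil)
  then show ?case
    by (simp only: sum.delta[OF finite_words_upto]) (auto simp: words_upto_def words_over_def)
next
  case (Cons a x)
  let ?\<sigma> = "right_inverse N f"
  let ?W = "words_upto N B"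
  have a: "a \<in> {1..N}" and x: "x \<in> words_over N" using Cons.prems by (auto simp: words_over_def)
  have first_block: "(\<Sum>w1 | w1 \<in> ?W \<and> w1 \<noteq> []. f a w1 * subst_coeff ?\<sigma> w1 v) = idc a v"
    if "length v \<le> B" for v
  proof -
    have "f a [] = 0" using assms(1) a by (simp add: Gdif_def)
    then have "(\<Sum>w1 | w1 \<in> ?W \<and> w1 \<noteq> []. f a w1 * subst_coeff ?\<sigma> w1 v)
        = (\<Sum>w1\<in>?W. f a w1 * subst_coeff ?\<sigma> w1 v)"
      by (intro sum.mono_neutral_left) auto
    also have "\<dots> = comp N f ?\<sigma> a v"
      by (rule comp_eq_sum[OF that, symmetric])
    also have "\<dots> = idc a v"
      by (rule comp_right_inverse[OF assms(1) a])
    finally show ?thesis .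
  qed
  have "(\<Sum>w\<in>?W. subst_coeff_op f (a # x) w * subst_coeff ?\<sigma> w u)
      = (\<Sum>m\<in>{0..length u}. \<Sum>w2\<in>?W. subst_coeff_op f x w2
          * (\<Sum>w1 | w1 \<in> ?W \<and> w1 \<noteq> []. f a w1 * subst_coeff ?\<sigma> w1 (take m u))
          * subst_coeff ?\<sigma> w2 (drop m u))"
    by (rule sum_subst_coeff_op_Cons_mult[OF Cons.prems(2)])
  also have "\<dots> = (\<Sum>m\<in>{0..length u}. if take m u = [a]
      then (\<Sum>w2\<in>?W. subst_coeff_op f x w2 * subst_coeff ?\<sigma> w2 (drop m u)) else 0)"
    using Cons.prems(2) by (intro sum.cong refl) (simp add: first_block idc_def)
  also have "\<dots> = (if u \<noteq> [] \<and> hd u = a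
      then (\<Sum>w2\<in>?W. subst_coeff_op f x w2 * subst_coeff ?\<sigma> w2 (tl u)) else 0)"
    by (rule sum_take_eq_singleton)
  also have "\<dots> = (if a # x = u then 1 else 0)"
    using Cons.IH[OF x, of "tl u"] Cons.prems(2) by (cases u) auto
  finally show ?case .
qed

definition left_inverse :: "nat \<Rightarrow> (nat \<Rightarrow> nat list \<Rightarrow> 'a::ring_1) \<Rightarrow> nat \<Rightarrow> nat list \<Rightarrow> 'a" where
  "left_inverse N f j v = right_inverse N (\<lambda>i u. f i (rev u)) j (rev v)"

lemma Gdif_left_inverse: "Gdif N (left_inverse N f)"
  by (simp add: Gdif_def left_inverse_def right_inverse_short idc_def)

lemma pairing_S_L_Y: "pairing (S_L N (Y j v)) f = left_inverse N f j v"
proof -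
  have "pairing (S_L N (Y j v)) f = op_pairing (SH_ext N (s_map (Y j v))) (\<lambda>i u. f i (rev u))"
    by (simp add: S_L_def pairing_s_map)
  also have "\<dots> = left_inverse N f j v"
    by (auto simp: op_pairing_SH_ext Y_def s_map_def fa_one_def left_inverse_def
        right_inverse_def[symmetric] right_inverse_short idc_def)
  finally show ?thesis .
qed

definition comp_op :: "nat \<Rightarrow> (nat \<Rightarrow> nat list \<Rightarrow> 'a::ring_1) \<Rightarrow> (nat \<Rightarrow> nat list \<Rightarrow> 'a) \<Rightarrow> nat \<Rightarrow> nat list \<Rightarrow> 'a" where
  "comp_op N g f i u = (\<Sum>x\<in>words_upto N (length u). g i x * subst_coeff_op f x u)"

lemma comp_eq_comp_op_rev:
  "comp N g f i u = comp_op N (\<lambda>j v. g j (rev v)) (\<lambda>j v. f j (rev v)) i (rev u)"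
  unfolding comp_op_def comp_eq_sum[OF order_refl]
  by (rule sum.reindex_bij_witness[where i=rev and j=rev])
     (auto simp: words_upto_def words_over_def subst_coeff_op_def)

lemma sum_comp_op_right_inverse_mult:
  assumes "Gdif N \<beta>" and "u \<in> words_over N"
  shows "(\<Sum>x\<in>words_upto N (length u).
      comp_op N (right_inverse N \<beta>) \<beta> i x * subst_coeff (right_inverse N \<beta>) x u) = right_inverse N \<beta> i u"
proof -
  let ?\<sigma> = "right_inverse N \<beta>"
  let ?U = "words_upto N (length u)"
  have "(\<Sum>x\<in>?U. comp_op N ?\<sigma> \<beta> i x * subst_coeff ?\<sigma> x u)
      = (\<Sum>x\<in>?U. \<Sum>y\<in>?U. ?\<sigma> i y * subst_coeff_op \<beta> y x * subst_coeff ?\<sigma> x u)"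
  proof (rule sum.cong[OF refl])
    fix x assume "x \<in> ?U"
    then have "length x \<le> length u" by (simp add: words_upto_def)
    then show "comp_op N ?\<sigma> \<beta> i x * subst_coeff ?\<sigma> x u
        = (\<Sum>y\<in>?U. ?\<sigma> i y * subst_coeff_op \<beta> y x * subst_coeff ?\<sigma> x u)"
      unfolding comp_op_def
      by (subst sum_words_upto_cutoff[where n="length x" and B="length u"])
         (auto simp: sum_distrib_right subst_coeff_op_eq_0)
  qed
  also have "\<dots> = (\<Sum>y\<in>?U. ?\<sigma> i y * (\<Sum>x\<in>?U. subst_coeff_op \<beta> y x * subst_coeff ?\<sigma> x u))"
    by (subst sum.swap) (simp add: sum_distrib_left mult.assoc)
  also have "\<dots> = (\<Sum>y\<in>?U. if y = u then ?\<sigma> i y else 0)"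
    by (rule sum.cong[OF refl], subst sum_subst_coeff_op_right_inverse[OF assms(1) _ order_refl])
       (auto simp: words_upto_def)
  also have "\<dots> = ?\<sigma> i u"
    using assms(2) by (simp only: sum.delta[OF finite_words_upto]) (simp add: words_upto_def)
  finally show ?thesis .
qed

lemma comp_op_right_inverse:
  assumes "Gdif N \<beta>" and "i \<in> {1..N}" and "u \<in> words_over N"
  shows "comp_op N (right_inverse N \<beta>) \<beta> i u = idc i u"
proof -
  let ?\<sigma> = "right_inverse N \<beta>"
  have "comp_op N ?\<sigma> \<beta> i u - idc i u = 0"
  proof (rule eq_0_of_unitriangular[where M="subst_coeff ?\<sigma>"])
    show "subst_coeff ?\<sigma> w v = (if w = v then 1 else 0)"
      if "w \<in> words_over N" "v \<in> words_over N" "length w = length v" for w v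
      using subst_coeff_Gdif_same_length[OF Gdif_right_inverse that] .
    fix v assume v: "v \<in> words_over N"
    \<comment> \<open>\<open>(\<sigma>\<^sub>i R\<^sub>\<beta>) M\<^sub>\<sigma> = \<sigma>\<^sub>i (R\<^sub>\<beta> M\<^sub>\<sigma>) = \<sigma>\<^sub>i = e\<^sub>i M\<^sub>\<sigma>\<close>\<close>
    have "(\<Sum>x\<in>words_upto N (length v). idc i x * subst_coeff ?\<sigma> x v) = ?\<sigma> i v"
      using assms(2) v
      by (subst sum_idc_mult[OF finite_words_upto])
         (auto simp: words_upto_def words_over_def subst_coeff_singleton right_inverse_short idc_def Suc_le_eq)
    with sum_comp_op_right_inverse_mult[OF assms(1) v]
    show "(\<Sum>x\<in>words_upto N (length v). (comp_op N ?\<sigma> \<beta> i x - idc i x) * subst_coeff ?\<sigma> x v) = 0"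
      by (simp add: left_diff_distrib sum_subtractf)
  qed (fact assms(3))
  then show ?thesis by simp
qed

lemma comp_left_inverse:
  assumes "Gdif N f" and "i \<in> {1..N}" and "u \<in> words_over N"
  shows "comp N (left_inverse N f) f i u = idc i u"
proof -
  have "Gdif N (\<lambda>j v. f j (rev v))" and "rev u \<in> words_over N"
    using assms(1,3) by (simp_all add: Gdif_def words_over_def)
  from comp_op_right_inverse[OF this(1) assms(2) this(2)] show ?thesis
    by (simp add: comp_eq_comp_op_rev left_inverse_def idc_def)
qed

lemma left_inverse_unique:
  assumes "Gdif N f"
    and inverse: "\<And>i u. i \<in> {1..N} \<Longrightarrow> u \<in> words_over N \<Longrightarrow> comp N g f i u = idc i u"
    and "j \<in> {1..N}" and "v \<in> words_over N"
  shows "g j v = left_inverse N f j v"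
proof -
  have "g j v - left_inverse N f j v = 0"
  proof (rule eq_0_of_unitriangular[where M="subst_coeff f"])
    show "subst_coeff f w u = (if w = u then 1 else 0)"
      if "w \<in> words_over N" "u \<in> words_over N" "length w = length u" for w u
      using subst_coeff_Gdif_same_length[OF assms(1) that] .
    show "(\<Sum>w\<in>words_upto N (length u). (g j w - left_inverse N f j w) * subst_coeff f w u) = 0"
      if "u \<in> words_over N" for u
      using inverse[OF assms(3) that] comp_left_inverse[OF assms(1,3) that]
      by (simp add: comp_eq_sum[OF order_refl] left_diff_distrib sum_subtractf)
  qed (fact assms(4))
  then show ?thesis by simp
qed

lemma left_inverse_iff:
  assumes "Gdif N f"
  shows "(\<forall>i\<in>{1..N}. \<forall>u\<in>words_over N. comp N g f i u = idc i u)
    \<longleftrightarrow> (\<forall>j\<in>{1..N}. \<forall>v\<in>words_over N. g j v = left_inverse N f j v)"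
proof (intro iffI ballI)
  fix j v
  assume "\<forall>i\<in>{1..N}. \<forall>u\<in>words_over N. comp N g f i u = idc i u" "j \<in> {1..N}" "v \<in> words_over N"
  then show "g j v = left_inverse N f j v"
    by (intro left_inverse_unique[OF assms]) auto
next
  fix i u
  assume "\<forall>j\<in>{1..N}. \<forall>v\<in>words_over N. g j v = left_inverse N f j v" "i \<in> {1..N}" "u \<in> words_over N"
  then show "comp N g f i u = idc i u"
    using comp_cong[of i N u g "left_inverse N f" f f] comp_left_inverse[OF assms] by simp
qed

theorem theorem11:
  fixes N :: nat and f :: "nat \<Rightarrow> nat list \<Rightarrow> 'a::ring_1"
  assumes "Gdif N f"
  shows "Gdif N (\<lambda>j v. pairing (S_L N (Y j v)) f)
       \<and> (\<forall>g. Gdif N g \<longrightarrow>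
            ((\<forall>i\<in>{1..N}. \<forall>u\<in>words_over N. comp N g f i u = idc i u)
             \<longleftrightarrow> (\<forall>j\<in>{1..N}. \<forall>v\<in>words_over N. g j v = pairing (S_L N (Y j v)) f)))
     \<and> Gdif N (\<lambda>j v. pairing (S_R N (Y j v)) f)
       \<and> (\<forall>h. Gdif N h \<longrightarrow>
            ((\<forall>i\<in>{1..N}. \<forall>u\<in>words_over N. comp N f h i u = idc i u)
             \<longleftrightarrow> (\<forall>j\<in>{1..N}. \<forall>v\<in>words_over N. h j v = pairing (S_R N (Y j v)) f)))"
  unfolding pairing_S_L_Y pairing_S_R_Y
  using Gdif_left_inverse Gdif_right_inverse left_inverse_iff[OF assms] right_inverse_iff[OF assms]
  by blast

end
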